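(* For every $(i,j)\in\mathcal I_0$ there is an integer $z$ such that $F_{ij}F_{\mathcal I_1}=q^{z}F_{\mathcal I_1}F_{ij}$ in $U_q$.
   Context: Let $m,n\ge 1$, let $q$ be an indeterminate, and let indices range over $[1,m+n]$. Put $q_i=q$ if $i\le m$ and $q_i=q^{-1}$ if $i>m$. Let $\mathcal I_0=\{(i,j):1\le i<j\le m \text{ or } m+1\le i<j\le m+n\}$, $\mathcal I_1=\{(i,j):1\le i\le m<j\le m+n\}$. The quantum supergroup $U_q=U_q(\mathfrak{gl}(m|n))$ is the associative $\mathbb C(q)$-superalgebra generated by $K_j^{\pm1}$ ($j\in[1,m+n]$) and $E_{i,i+1},F_{i,i+1}$ ($1\le i<m+n$), where $K_j^{\pm1}$ and $E_{i,i+1},F_{i,i+1}$ for $i\ne m$ are even and $E_{m,m+1},F_{m,m+1}$ are odd, subject to: $K_iK_j=K_jK_i$, $K_iK_i^{-1}=1$; $K_iE_{j,j+1}K_i^{-1}=q_i^{\delta_{ij}-\delta_{i,j+1}}E_{j,j+1}$, $K_iF_{j,j+1}K_i^{-1}=q_i^{-(\delta_{ij}-\delta_{i,j+1})}F_{j,j+1}$; $[E_{i,i+1},F_{j,j+1}]=\delta_{ij}\frac{K_iK_{i+1}^{-1}-K_i^{-1}K_{i+1}}{q_i-q_i^{-1}}$; $E_{m,m+1}^2=F_{m,m+1}^2=0$; $E_{i,i+1}E_{j,j+1}=E_{j,j+1}E_{i,i+1}$ and $F_{i,i+1}F_{j,j+1}=F_{j,j+1}F_{i,i+1}$ for $|i-j|>1$;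 for $|i-j|=1$, $i\neq m$, and $X\in\{E,F\}$: $X_{i,i+1}^2X_{j,j+1}-(q+q^{-1})X_{i,i+1}X_{j,j+1}X_{i,i+1}+X_{j,j+1}X_{i,i+1}^2=0$; and $[E_{m-1,m+2},E_{m,m+1}]=[F_{m-1,m+2},F_{m,m+1}]=0$. Here for homogeneous $x,y$, $[x,y]=xy-(-1)^{\bar x\bar y}yx$. For $i<j$ with $j>i+1$, $E_{ij}=E_{ic}E_{cj}-q_c^{-1}E_{cj}E_{ic}$ and $F_{ij}=-q_cF_{ic}F_{cj}+F_{cj}F_{ic}$ for $i<c<j$ (independent of $c$); $E_{ij},F_{ij}$ are odd iff $(i,j)\in\mathcal I_1$. Order on $\mathcal I_1$: $(i,j)\prec(s,t)$ iff $j>t$, or $j=t$ and $i<s$. $F_{\mathcal I_1}$ is the product of all $F_{ij}$, $(i,j)\in\mathcal I_1$, taken in increasing $\prec$-order. *)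

theory Defs
  imports Complex_Main "HOL-Computational_Algebra.Polynomial" "HOL-Computational_Algebra.Fraction_Field"
begin

type_synonym Cq = "complex poly fract"

definition qX :: Cq where "qX = Fract [:0, 1:] 1"

definition qq :: "nat \<Rightarrow> nat \<Rightarrow> Cq" where
  "qq m i = (if i \<le> m then qX else inverse qX)"

definition I0 :: "nat \<Rightarrow> nat \<Rightarrow> (nat \<times> nat) set" where
  "I0 m n = {(i, j). (1 \<le> i \<and> i < j \<and> j \<le> m) \<or> (m + 1 \<le> i \<and> i < j \<and> j \<le> m + n)}"

definition I1 :: "nat \<Rightarrow> nat \<Rightarrow> (nat \<times> nat) set" where
  "I1 m n = {(i, j). 1 \<le> i \<and> i \<le> m \<and> m < j \<and> j \<le> m + n}"

text \<open>An algebra over C(q) is a ring with a ring homomorphism phi from C(q) into its centre;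
  scalar multiplication c.x is phi c * x.  E i stands for E_{i,i+1}, F i for F_{i,i+1},
  K i for K_i and Ki i for K_i^{-1}.
  The second argument of Er/Fr is the length j - i.\<close>

fun Er :: "(Cq \<Rightarrow> 'a::ring_1) \<Rightarrow> nat \<Rightarrow> (nat \<Rightarrow> 'a) \<Rightarrow> nat \<Rightarrow> nat \<Rightarrow> 'a" where
  "Er \<phi> m E i 0 = 0"
| "Er \<phi> m E i (Suc 0) = E i"
| "Er \<phi> m E i (Suc (Suc d)) =
     E i * Er \<phi> m E (i + 1) (Suc d) - \<phi> (inverse (qq m (i + 1))) * Er \<phi> m E (i + 1) (Suc d) * E i"

fun Fr :: "(Cq \<Rightarrow> 'a::ring_1) \<Rightarrow> nat \<Rightarrow> (nat \<Rightarrow> 'a) \<Rightarrow> nat \<Rightarrow> nat \<Rightarrow> 'a" where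
  "Fr \<phi> m F i 0 = 0"
| "Fr \<phi> m F i (Suc 0) = F i"
| "Fr \<phi> m F i (Suc (Suc d)) =
     - (\<phi> (qq m (i + 1)) * F i * Fr \<phi> m F (i + 1) (Suc d)) + Fr \<phi> m F (i + 1) (Suc d) * F i"

definition Eij :: "(Cq \<Rightarrow> 'a::ring_1) \<Rightarrow> nat \<Rightarrow> (nat \<Rightarrow> 'a) \<Rightarrow> nat \<Rightarrow> nat \<Rightarrow> 'a" where
  "Eij \<phi> m E i j = Er \<phi> m E i (j - i)"

definition Fij :: "(Cq \<Rightarrow> 'a::ring_1) \<Rightarrow> nat \<Rightarrow> (nat \<Rightarrow> 'a) \<Rightarrow> nat \<Rightarrow> nat \<Rightarrow> 'a" where
  "Fij \<phi> m F i j = Fr \<phi> m F i (j - i)"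

text \<open>The list of I_1 in increasing order: (i,j) before (s,t) iff j > t, or j = t and i < s.\<close>
definition I1_list :: "nat \<Rightarrow> nat \<Rightarrow> (nat \<times> nat) list" where
  "I1_list m n = concat (map (\<lambda>j. map (\<lambda>i. (i, j)) [1..<m + 1]) (rev [m + 1..<m + n + 1]))"

definition F_I1 :: "(Cq \<Rightarrow> 'a::ring_1) \<Rightarrow> nat \<Rightarrow> nat \<Rightarrow> (nat \<Rightarrow> 'a) \<Rightarrow> 'a" where
  "F_I1 \<phi> m n F = prod_list (map (\<lambda>(i, j). Fij \<phi> m F i j) (I1_list m n))"

text \<open>parity of the simple generators: E_{i,i+1}, F_{i,i+1} odd iff i = m;
  sign of the super commutator [x,y] = xy - (-1)^{|x||y|} yx.\<close>
definition ssign :: "nat \<Rightarrow> nat \<Rightarrow> nat \<Rightarrow> 'a::ring_1" where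
  "ssign m i j = (if i = m \<and> j = m then -1 else 1)"

text \<open>The defining relations of U_q(gl(m|n)) holding for elements K, Ki, E, F of an algebra
  (phi, 'a) over C(q).  Every such datum receives a unique map from U_q, and U_q itself is such a datum.\<close>
definition Uq_rels :: "nat \<Rightarrow> nat \<Rightarrow> (Cq \<Rightarrow> 'a::ring_1) \<Rightarrow> (nat \<Rightarrow> 'a) \<Rightarrow> (nat \<Rightarrow> 'a)
    \<Rightarrow> (nat \<Rightarrow> 'a) \<Rightarrow> (nat \<Rightarrow> 'a) \<Rightarrow> bool" where
  "Uq_rels m n \<phi> K Ki E F \<longleftrightarrow>
     (\<phi> 1 = 1 \<and> (\<forall>a b. \<phi> (a + b) = \<phi> a + \<phi> b) \<and> (\<forall>a b. \<phi> (a * b) = \<phi> a * \<phi> b)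
      \<and> (\<forall>a x. \<phi> a * x = x * \<phi> a))
   \<and> (\<forall>i\<in>{1..m+n}. \<forall>j\<in>{1..m+n}. K i * K j = K j * K i)
   \<and> (\<forall>i\<in>{1..m+n}. K i * Ki i = 1 \<and> Ki i * K i = 1)
   \<and> (\<forall>i\<in>{1..m+n}. \<forall>j\<in>{1..<m+n}.
        K i * E j * Ki i = \<phi> (qq m i powi (of_bool (i = j) - of_bool (i = j + 1))) * E j
      \<and> K i * F j * Ki i = \<phi> (qq m i powi (- (of_bool (i = j) - of_bool (i = j + 1)))) * F j)
   \<and> (\<forall>i\<in>{1..<m+n}. \<forall>j\<in>{1..<m+n}.
        E i * F j - ssign m i j * F j * E i =
          (if i = j then \<phi> (inverse (qq m i - inverse (qq m i))) * (K i * Ki (i + 1) - Ki i * K (i + 1))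
           else 0))
   \<and> E m * E m = 0 \<and> F m * F m = 0
   \<and> (\<forall>i\<in>{1..<m+n}. \<forall>j\<in>{1..<m+n}. (i + 1 < j \<or> j + 1 < i) \<longrightarrow>
        E i * E j = E j * E i \<and> F i * F j = F j * F i)
   \<and> (\<forall>i\<in>{1..<m+n}. \<forall>j\<in>{1..<m+n}. (i + 1 = j \<or> j + 1 = i) \<and> i \<noteq> m \<longrightarrow>
        E i * E i * E j - \<phi> (qX + inverse qX) * E i * E j * E i + E j * E i * E i = 0
      \<and> F i * F i * F j - \<phi> (qX + inverse qX) * F i * F j * F i + F j * F i * F i = 0)
   \<and> (2 \<le> m \<and> 2 \<le> n \<longrightarrow>
        Eij \<phi> m E (m - 1) (m + 2) * E m + E m * Eij \<phi> m E (m - 1) (m + 2) = 0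
      \<and> Fij \<phi> m F (m - 1) (m + 2) * F m + F m * Fij \<phi> m F (m - 1) (m + 2) = 0)"

end

theory Submission
  imports Defs
begin

text \<open>
  We prove the statement with z = 0: for (i,j) in I_0 the root vector F_{ij} commutes with F_{I_1}.
  Since F_{ij} is an iterated twisted commutator of the even simple generators F_i, ..., F_{j-1}
  (none of them is the odd generator F_m), it suffices to show that every even F_k commutes with
  F_{I_1}.  Write F_{I_1} as the product of its columns Col t = F_{1t} F_{2t} ... F_{mt},
  t = m+n, ..., m+1.

  Then, for the generators of U_q(gl(m|n)), it derives the q-commutation of a simple
  F_k with the root vectors F_{it}, the vanishing of the squares of odd root vectors, and finally:
  for k < m, F_k commutes with each column (it commutes with F_{it} for i \<noteq> k, k+1 and with the
  product F_{kt} F_{k+1,t}); for k > m, F_k commutes with all columns except Col (k+1) and Col k,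
  and it commutes with their product Col (k+1) * Col k, the factors q^m and q^{-m} cancelling;
  here the correction terms vanish because Col (k+1) annihilates the odd root vectors
  F_{j,k+1} from the left (an induction driven by an exchange relation for crossing twisted
  commutators).
\<close>

lemma prod_list_concat: "prod_list (concat xss) = prod_list (map prod_list xss)"
  by (induct xss) auto

lemma upt_split: "i \<le> j \<Longrightarrow> j \<le> l \<Longrightarrow> [i..<l] = [i..<j] @ [j..<l]"
  using upt_add_eq_append[of i j "l - j"] by simp

locale central_scalars =
  fixes \<phi> :: "Cq \<Rightarrow> 'a::ring_1"
  assumes phi_one: "\<phi> 1 = 1" and phi_add: "\<And>a b. \<phi> (a + b) = \<phi> a + \<phi> b"
    and phi_mult: "\<And>a b. \<phi> (a * b) = \<phi> a * \<phi> b" and phi_central: "\<And>a x. \<phi> a * x = x * \<phi> a"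
begin

lemma phi_zero: "\<phi> 0 = 0"
  using phi_add[of 0 0] by simp

lemma phi_minus: "\<phi> (- a) = - \<phi> a"
proof -
  have "\<phi> a + \<phi> (- a) = 0" using phi_add[of a "- a"] phi_zero by simp
  then show ?thesis by (metis add.commute eq_neg_iff_add_eq_0)
qed

lemma phi_diff: "\<phi> (a - b) = \<phi> a - \<phi> b"
  using phi_add[of a "- b"] phi_minus by simp

lemma phi_inverse_right: "c \<noteq> 0 \<Longrightarrow> \<phi> c * \<phi> (inverse c) = 1"
  by (simp flip: phi_mult add: phi_one)

lemma phi_inverse_left: "c \<noteq> 0 \<Longrightarrow> \<phi> (inverse c) * \<phi> c = 1"
  by (simp flip: phi_mult add: phi_one)

lemma phi_cancel: assumes "c \<noteq> 0" and "\<phi> c * x = 0" shows "x = 0"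
proof -
  have "(\<phi> (inverse c) * \<phi> c) * x = 0" by (simp add: assms(2) mult.assoc)
  then show ?thesis using phi_inverse_left[OF assms(1)] by simp
qed

lemma scalar_comm: "NO_MATCH (\<phi> d) x \<Longrightarrow> x * \<phi> c = \<phi> c * x"
  by (simp add: phi_central)
lemma scalar_comm_left: "NO_MATCH (\<phi> d) x \<Longrightarrow> x * (\<phi> c * y) = \<phi> c * (x * y)"
  by (metis mult.assoc phi_central)
lemma scalar_mult_left: "\<phi> c * (\<phi> d * y) = \<phi> (c * d) * y"
  by (simp add: phi_mult mult.assoc)
lemma scalar_mult: "\<phi> c * \<phi> d = \<phi> (c * d)"
  by (simp add: phi_mult)

lemmas scalar_simps = scalar_comm scalar_comm_left scalar_mult_left scalar_mult

text \<open>The twisted commutator [x,y]_a = -a x y + y x; the non-simple root vectors F_{ij} are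
  iterated twisted commutators of simple ones.\<close>
definition twist :: "Cq \<Rightarrow> 'a \<Rightarrow> 'a \<Rightarrow> 'a" where
  "twist a x y = - (\<phi> a * x * y) + y * x"

definition qcomm :: "'a \<Rightarrow> 'a \<Rightarrow> Cq \<Rightarrow> bool" where
  "qcomm x y c \<longleftrightarrow> x * y = \<phi> c * y * x"

lemma qcomm_one_iff: "qcomm x y 1 \<longleftrightarrow> x * y = y * x"
  unfolding qcomm_def by (simp add: phi_one)

text \<open>Associativity of nested twisted commutators when the outer entries commute; this lets a
  root vector F_{ij} be split at any intermediate index.\<close>
lemma twist_swap: assumes "A * Y = Y * A"
  shows "twist \<alpha> A (twist \<beta> b Y) = twist \<beta> (twist \<alpha> A b) Y"
proof -
  have "A * (Y * z) = Y * (A * z)" for z by (metis assms mult.assoc)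
  then show ?thesis unfolding twist_def
    by (simp add: algebra_simps scalar_simps assms mult.commute)
qed

lemma qcomm_mult_left: "qcomm u Z c1 \<Longrightarrow> qcomm v Z c2 \<Longrightarrow> qcomm (u * v) Z (c1 * c2)"
  unfolding qcomm_def
proof -
  assume u: "u * Z = \<phi> c1 * Z * u" and v: "v * Z = \<phi> c2 * Z * v"
  have "u * v * Z = u * (\<phi> c2 * Z * v)" by (simp add: mult.assoc v)
  also have "\<dots> = \<phi> c2 * ((u * Z) * v)" by (simp add: scalar_simps mult.assoc)
  also have "\<dots> = \<phi> (c1 * c2) * Z * (u * v)" by (simp add: u scalar_simps mult.assoc mult.commute)
  finally show "u * v * Z = \<phi> (c1 * c2) * Z * (u * v)" .
qed

lemma qcomm_mult_right: "qcomm x u c1 \<Longrightarrow> qcomm x v c2 \<Longrightarrow> qcomm x (u * v) (c1 * c2)"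
  unfolding qcomm_def
proof -
  assume u: "x * u = \<phi> c1 * u * x" and v: "x * v = \<phi> c2 * v * x"
  have "x * (u * v) = \<phi> c1 * u * (x * v)" by (simp add: mult.assoc[symmetric] u)
  also have "\<dots> = \<phi> (c1 * c2) * (u * v) * x" by (simp add: v scalar_simps mult.assoc)
  finally show "x * (u * v) = \<phi> (c1 * c2) * (u * v) * x" .
qed

lemma qcomm_twist_left: assumes "qcomm u Z c1" "qcomm v Z c2"
  shows "qcomm (twist a u v) Z (c1 * c2)"
proof -
  have uv: "u * v * Z = \<phi> (c1 * c2) * Z * (u * v)"
    using qcomm_mult_left[OF assms] qcomm_def by blast
  have vu: "v * u * Z = \<phi> (c1 * c2) * Z * (v * u)"
    using qcomm_mult_left[OF assms(2,1)] qcomm_def by (metis mult.commute)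
  have "twist a u v * Z = - (\<phi> a * (u * v * Z)) + v * u * Z"
    unfolding twist_def by (simp add: algebra_simps)
  also have "\<dots> = \<phi> (c1 * c2) * Z * twist a u v" unfolding uv vu twist_def
    by (simp add: algebra_simps scalar_simps mult.commute)
  finally show ?thesis unfolding qcomm_def .
qed

lemma qcomm_twist_right: assumes "qcomm x u c1" "qcomm x v c2"
  shows "qcomm x (twist a u v) (c1 * c2)"
proof -
  have uv: "x * (u * v) = \<phi> (c1 * c2) * (u * v) * x"
    using qcomm_mult_right[OF assms] qcomm_def by blast
  have vu: "x * (v * u) = \<phi> (c1 * c2) * (v * u) * x"
    using qcomm_mult_right[OF assms(2,1)] qcomm_def by (metis mult.commute)
  have "x * twist a u v = - (\<phi> a * (x * (u * v))) + x * (v * u)"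
    unfolding twist_def by (simp add: algebra_simps scalar_simps)
  also have "\<dots> = \<phi> (c1 * c2) * twist a u v * x" unfolding uv vu twist_def
    by (simp add: algebra_simps scalar_simps mult.commute)
  finally show ?thesis unfolding qcomm_def .
qed

lemma qcomm_prod_left: "(\<forall>u\<in>set L. qcomm u Z c) \<Longrightarrow> qcomm (prod_list L) Z (c ^ length L)"
proof (induction L)
  case Nil then show ?case by (simp add: qcomm_def phi_one)
next
  case (Cons a L) then show ?case using qcomm_mult_left by fastforce
qed

lemma qcomm_prod_right: "(\<forall>u\<in>set L. qcomm x u c) \<Longrightarrow> qcomm x (prod_list L) (c ^ length L)"
proof (induction L)
  case Nil then show ?case by (simp add: qcomm_def phi_one)
next
  case (Cons a L) then show ?case using qcomm_mult_right by fastforce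
qed

lemma qcomm_prod_map_right: "(\<And>i. i \<in> set L \<Longrightarrow> qcomm x (g i) 1) \<Longrightarrow> qcomm x (prod_list (map g L)) 1"
  using qcomm_prod_right[of "map g L" x 1] by auto

definition serre :: "Cq \<Rightarrow> 'a \<Rightarrow> 'a \<Rightarrow> 'a" where
  "serre s b y = b * b * y - \<phi> s * b * y * b + y * b * b"

lemma serre_twist: assumes "serre s b y = 0" "A * b = b * A"
  shows "serre s b (twist \<alpha> A y) = 0" "serre s b (twist \<alpha> y A) = 0"
proof -
  have e: "A * (b * z) = b * (A * z)" for z by (metis assms(2) mult.assoc)
  have left: "serre s b (A * y) = A * serre s b y" unfolding serre_def
    by (simp add: algebra_simps scalar_simps e assms(2))
  have right: "serre s b (y * A) = serre s b y * A" unfolding serre_def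
    by (simp add: algebra_simps scalar_simps e assms(2))
  have "serre s b (twist \<alpha> A y) = - (\<phi> \<alpha> * serre s b (A * y)) + serre s b (y * A)"
    unfolding serre_def twist_def by (simp add: algebra_simps scalar_simps)
  then show "serre s b (twist \<alpha> A y) = 0" using left right assms(1) by simp
  have "serre s b (twist \<alpha> y A) = - (\<phi> \<alpha> * serre s b (y * A)) + serre s b (A * y)"
    unfolding serre_def twist_def by (simp add: algebra_simps scalar_simps)
  then show "serre s b (twist \<alpha> y A) = 0" using left right assms(1) by simp
qed

lemma serre_square_zero_words:
  assumes Y: "Y * Y = 0" and S: "serre s b Y = 0" and s: "s \<noteq> 0"
  shows "Y * (b * (b * Y)) = \<phi> s * (b * (Y * (b * Y)))"
    and "Y * (b * (Y * b)) = b * (Y * (b * Y))"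
proof -
  have Yz: "Y * (Y * z) = 0" for z by (metis Y mult.assoc mult_zero_left)
  have bbY: "b * (b * Y) = \<phi> s * (b * (Y * b)) - Y * (b * b)"
    using S unfolding serre_def by (simp add: algebra_simps scalar_simps)
  have Ybb: "Y * (b * b) = \<phi> s * (b * (Y * b)) - b * (b * Y)"
    using bbY by (simp add: algebra_simps)
  have first: "Y * (b * (b * Y)) = \<phi> s * (Y * (b * (Y * b)))"
    by (simp add: bbY algebra_simps scalar_simps Yz)
  have "Y * (b * (b * Y)) = (Y * (b * b)) * Y" by (simp add: mult.assoc)
  also have "\<dots> = \<phi> s * (b * (Y * (b * Y)))" unfolding Ybb
    by (simp add: algebra_simps scalar_simps Yz Y)
  finally show second: "Y * (b * (b * Y)) = \<phi> s * (b * (Y * (b * Y)))" .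
  have "\<phi> s * (Y * (b * (Y * b)) - b * (Y * (b * Y))) = 0"
    using first second by (simp add: algebra_simps)
  then have "Y * (b * (Y * b)) - b * (Y * (b * Y)) = 0" by (rule phi_cancel[OF s])
  then show "Y * (b * (Y * b)) = b * (Y * (b * Y))" by simp
qed

lemma twist_square_zero: assumes Y: "Y * Y = 0" and S: "serre s b Y = 0"
  and r: "r * r - r * s + 1 = 0" and s: "s \<noteq> 0"
  shows "twist r b Y * twist r b Y = 0" "twist r Y b * twist r Y b = 0"
proof -
  have Yz: "Y * (Y * z) = 0" for z by (metis Y mult.assoc mult_zero_left)
  note words = serre_square_zero_words[OF Y S s]
  have rr: "\<phi> (r * r) * w - \<phi> (r * s) * w + w = 0" for w
  proof -
    have "\<phi> (r * r - r * s + 1) * w = 0" by (simp add: r phi_zero)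
    then show ?thesis by (simp add: algebra_simps phi_diff phi_add phi_one)
  qed
  show "twist r b Y * twist r b Y = 0" unfolding twist_def
    using rr[of "b * (Y * (b * Y))"]
    by (simp add: algebra_simps scalar_simps Yz Y words mult.commute)
  show "twist r Y b * twist r Y b = 0" unfolding twist_def
    using rr[of "b * (Y * (b * Y))"]
    by (simp add: algebra_simps scalar_simps Yz Y words mult.commute)
qed

lemma serre_left_end: assumes S: "serre s b c = 0" and r: "r * r - r * s + 1 = 0"
  shows "qcomm b (twist r b c) r"
proof -
  have bbc: "b * (b * c) = \<phi> s * (b * (c * b)) - c * (b * b)"
    using S unfolding serre_def by (simp add: algebra_simps scalar_simps)
  have "\<phi> (r * r - r * s + 1) * w = 0" for w by (simp add: r phi_zero)
  then have rr: "\<phi> (r * s) * w = \<phi> (r * r) * w + w" for w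
    by (simp add: algebra_simps phi_diff phi_add phi_one)
  show ?thesis unfolding qcomm_def twist_def
    by (simp add: algebra_simps scalar_simps bbc rr mult.commute)
qed

lemma serre_right_end: assumes S: "serre s b y = 0"
  and r: "r * r - r * s + 1 = 0" and r0: "r \<noteq> 0"
  shows "qcomm b (twist r y b) (inverse r)"
proof -
  have bby: "b * (b * y) = \<phi> s * (b * (y * b)) - y * (b * b)"
    using S unfolding serre_def by (simp add: algebra_simps scalar_simps)
  have "r * (s - r) = 1" using r by (simp add: algebra_simps)
  then have "s - r = inverse r" using r0 by (metis inverse_unique mult.commute)
  then have s_eq: "s = r + inverse r" by (simp add: algebra_simps)
  have ri: "\<phi> (inverse r * r) = 1" "\<phi> (r * inverse r) = 1" using r0 by (simp_all add: phi_one)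
  show ?thesis unfolding qcomm_def twist_def
    by (simp add: algebra_simps scalar_simps bby s_eq phi_add ri mult.commute)
qed

text \<open>Rank-three configuration: let a, c commute and let b q-commute with Y = [b,c]_r by r and
  with Z = [a,b]_r by r^{-1}.  Then the element X = [a,Y]_r = [Z,c]_r satisfies
  (1 + r^2)(b X - X b) = 0: computing b X - X b once through each of the two expressions of X
  and adding the results gives 2(b X - X b) = (1 - r^2)(b X - X b).\<close>
lemma twist_rank3_defect:
  assumes ac: "a * c = c * a"
    and left: "qcomm b (twist r b c) r" and right: "qcomm b (twist r a b) (inverse r)"
    and r0: "r \<noteq> 0"
  defines "X \<equiv> twist r a (twist r b c)"
  shows "\<phi> (1 + r * r) * (b * X - X * b) = 0"
proof -
  define Y where "Y = twist r b c"
  define Z where "Z = twist r a b"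
  have XY: "X = twist r a Y" unfolding X_def Y_def ..
  have XZ: "X = twist r Z c" unfolding X_def Y_def Z_def using twist_swap[OF ac] by simp
  have ri: "\<phi> r * \<phi> (inverse r) = 1" "\<phi> (inverse r) * \<phi> r = 1"
    using phi_inverse_right[OF r0] phi_inverse_left[OF r0] by auto
  have bY: "b * Y = \<phi> r * Y * b" using left unfolding qcomm_def Y_def .
  have Yb: "Y * b = \<phi> (inverse r) * (b * Y)"
    by (simp add: bY mult.assoc[symmetric] ri(2))
  have bZ: "b * Z = \<phi> (inverse r) * Z * b" using right unfolding qcomm_def Z_def .
  have Zb: "Z * b = \<phi> r * (b * Z)"
    by (simp add: bZ mult.assoc[symmetric] ri(1))
  have ba: "b * a = Z + \<phi> r * (a * b)" unfolding Z_def twist_def by (simp add: mult.assoc)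
  have cb: "c * b = Y + \<phi> r * (b * c)" unfolding Y_def twist_def by (simp add: mult.assoc)
  define E1 where "E1 = - (\<phi> r * ((Z + \<phi> r * (a * b)) * Y)) + \<phi> r * (Y * (Z + \<phi> r * (a * b)))"
  define E2 where "E2 = - (a * b * Y) + Y * a * b"
  define E3 where "E3 = - (Z * b * c) + b * c * Z"
  define E4 where "E4 = - (\<phi> r * (Z * (Y + \<phi> r * (b * c)))) + \<phi> r * ((Y + \<phi> r * (b * c)) * Z)"
  have bX_Y: "b * X = E1"
  proof -
    have "b * X = - (\<phi> r * ((b * a) * Y)) + (b * Y) * a"
      unfolding XY twist_def by (simp add: algebra_simps scalar_simps)
    also have "\<dots> = - (\<phi> r * ((b * a) * Y)) + \<phi> r * (Y * (b * a))"
      by (simp add: bY scalar_simps mult.assoc)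
    finally show ?thesis unfolding E1_def by (simp only: ba)
  qed
  have Xb_Y: "X * b = E2"
  proof -
    have "X * b = - (\<phi> r * (a * (Y * b))) + Y * a * b"
      unfolding XY twist_def by (simp add: algebra_simps scalar_simps)
    then show ?thesis unfolding E2_def
      by (simp add: Yb scalar_simps mult.assoc[symmetric] r0 phi_one)
  qed
  have bX_Z: "b * X = E3"
  proof -
    have "b * X = - (\<phi> r * ((b * Z) * c)) + b * c * Z"
      unfolding XZ twist_def by (simp add: algebra_simps scalar_simps)
    then show ?thesis unfolding E3_def by (simp add: bZ scalar_simps mult.assoc r0 phi_one)
  qed
  have Xb_Z: "X * b = E4"
  proof -
    have "X * b = - (\<phi> r * (Z * (c * b))) + c * (Z * b)"
      unfolding XZ twist_def by (simp add: algebra_simps scalar_simps)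
    also have "\<dots> = - (\<phi> r * (Z * (c * b))) + \<phi> r * ((c * b) * Z)"
      by (simp add: Zb scalar_simps mult.assoc)
    finally show ?thesis unfolding E4_def by (simp only: cb)
  qed
  have "(b * X - X * b) + (b * X - X * b) = (E1 - E2) + (E3 - E4)"
    using bX_Y Xb_Y bX_Z Xb_Z by simp
  also have "\<dots> = \<phi> (1 - r * r) * (E3 - E2)" unfolding E1_def E2_def E3_def E4_def
    by (simp add: algebra_simps scalar_simps phi_diff phi_one mult.commute)
  also have "\<dots> = \<phi> (1 - r * r) * (b * X - X * b)" using bX_Z Xb_Y by simp
  finally show ?thesis by (simp add: phi_add phi_diff phi_one algebra_simps)
qed

lemma twist_rank3_commute:
  assumes "a * c = c * a"
    and "qcomm b (twist r b c) r" and "qcomm b (twist r a b) (inverse r)"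
    and "r \<noteq> 0" and "1 + r * r \<noteq> 0"
  shows "qcomm b (twist r a (twist r b c)) 1"
proof -
  have "b * twist r a (twist r b c) - twist r a (twist r b c) * b = 0"
    using phi_cancel[OF assms(5) twist_rank3_defect[OF assms(1-4)]] .
  then show ?thesis unfolding qcomm_one_iff by simp
qed

lemma qcomm_twist_nilpotent: assumes "B * B = 0" shows "qcomm B (twist \<alpha> A B) (- \<alpha>)"
proof -
  have z: "B * (B * z) = 0" for z by (metis assms mult.assoc mult_zero_left)
  show ?thesis unfolding qcomm_def twist_def by (simp add: algebra_simps scalar_simps z assms phi_minus)
qed

text \<open>Exchange relation for a crossing pair of twisted commutators: with y^2 = 0,
  y' = [A,y]_\<alpha>, x = [y,f]_\<beta>, x' = [A,x]_\<alpha> and y q-commuting with x', the product y' x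
  is a combination of x y' and x' y.  This drives the induction showing that the columns of
  F_{I_1} annihilate odd root vectors.\<close>
lemma twist_crossing: assumes yp: "yp = twist \<alpha> A y" and xp: "xp = twist \<alpha> A x" and x: "x = twist \<beta> y f"
  and yy: "y * y = 0" and nest: "y * xp = \<phi> c * xp * y"
  shows "\<phi> (\<alpha> * \<beta>) * (yp * x) = - (x * yp) - \<phi> (\<alpha> + \<beta> * c) * (xp * y)"
proof -
  have yyz: "y * (y * z) = 0" for z by (metis yy mult.assoc mult_zero_left)
  have xy: "x * y = - (\<phi> \<beta> * (y * x))" unfolding x twist_def by (simp add: algebra_simps scalar_simps yyz yy)
  have Ax: "\<phi> \<alpha> * (A * x) = x * A - xp" unfolding xp twist_def by (simp add: mult.assoc)
  have Ay: "\<phi> \<alpha> * (A * y) = y * A - yp" unfolding yp twist_def by (simp add: mult.assoc)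
  have t1: "\<phi> (\<alpha> * \<beta>) * (- (\<phi> \<alpha> * (A * (y * x)))) = x * y * A - x * yp - \<phi> \<alpha> * (xp * y)"
  proof -
    have "\<phi> (\<alpha> * \<beta>) * (- (\<phi> \<alpha> * (A * (y * x)))) = \<phi> \<alpha> * (A * (- (\<phi> \<alpha> * (\<phi> \<beta> * (y * x)))))"
      by (simp add: scalar_simps mult.commute)
    also have "\<dots> = \<phi> \<alpha> * (\<phi> \<alpha> * (A * (x * y)))" by (simp add: xy scalar_simps)
    also have "\<dots> = \<phi> \<alpha> * ((\<phi> \<alpha> * (A * x)) * y)" by (simp add: scalar_simps mult.assoc)
    also have "\<dots> = x * (\<phi> \<alpha> * (A * y)) - \<phi> \<alpha> * (xp * y)" unfolding Ax by (simp add: algebra_simps scalar_simps)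
    also have "\<dots> = x * y * A - x * yp - \<phi> \<alpha> * (xp * y)" unfolding Ay by (simp add: algebra_simps)
    finally show ?thesis .
  qed
  have t2: "\<phi> (\<alpha> * \<beta>) * (y * (A * x)) = - (x * y * A) - \<phi> (\<beta> * c) * (xp * y)"
  proof -
    have "\<phi> (\<alpha> * \<beta>) * (y * (A * x)) = \<phi> \<beta> * (y * (\<phi> \<alpha> * (A * x)))"
      by (simp add: scalar_simps mult.commute)
    also have "\<dots> = (\<phi> \<beta> * (y * x)) * A - \<phi> \<beta> * (y * xp)" unfolding Ax by (simp add: algebra_simps scalar_simps)
    also have "\<dots> = - (x * y * A) - \<phi> (\<beta> * c) * (xp * y)"
    proof -
      have xy': "x * (y * z) = - (\<phi> \<beta> * (y * (x * z)))" for z by (metis xy mult.assoc scalar_simps(2) minus_mult_left)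
      show ?thesis by (simp add: xy' nest scalar_simps mult.assoc)
    qed
    finally show ?thesis .
  qed
  have "\<phi> (\<alpha> * \<beta>) * (yp * x) = \<phi> (\<alpha> * \<beta>) * (- (\<phi> \<alpha> * (A * (y * x)))) + \<phi> (\<alpha> * \<beta>) * (y * (A * x))"
    unfolding yp twist_def by (simp add: algebra_simps)
  also have "\<dots> = - (x * yp) - \<phi> (\<alpha> + \<beta> * c) * (xp * y)" unfolding t1 t2
    by (simp add: algebra_simps phi_add)
  finally show ?thesis .
qed

end

text \<open>Arithmetic of q in C(q).  Both values r = q, q^{-1} of q_i are roots of
  r^2 - (q + q^{-1}) r + 1 with 1 + r^2 \<noteq> 0; the latter holds because q^2 \<noteq> -1.\<close>

abbreviation qsum :: Cq where "qsum \<equiv> qX + inverse qX"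

lemma qX_nonzero: "qX \<noteq> 0"
  unfolding qX_def Zero_fract_def by (simp add: eq_fract)

lemma qX_square: "qX * qX \<noteq> -1"
proof
  assume "qX * qX = -1"
  then have "Fract ([:0,1:] * [:0,1:]) (1::complex poly) = Fract (-1) 1"
    unfolding qX_def by (simp add: One_fract_def)
  then have "[:0,1:] * [:0,1:] = (-1 :: complex poly)" by (simp add: eq_fract)
  then have "coeff ([:0,1:] * [:0,1:]) 2 = coeff (-1 :: complex poly) 2" by simp
  then show False by (simp add: coeff_mult numeral_2_eq_2)
qed

lemma qsum_nonzero: "qsum \<noteq> 0"
proof
  assume "qsum = 0"
  then have "qX * qsum = 0" by simp
  then have "qX * qX + 1 = 0" using qX_nonzero by (simp add: distrib_left)
  then show False using qX_square by (simp add: eq_neg_iff_add_eq_0)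
qed

lemma qq_cases: "qq m i = qX \<or> qq m i = inverse qX"
  unfolding qq_def by auto

lemma qq_even: "i \<le> m \<Longrightarrow> qq m i = qX"
  unfolding qq_def by simp

lemma qq_odd: "m < i \<Longrightarrow> qq m i = inverse qX"
  unfolding qq_def by simp

lemma qq_nonzero: "qq m i \<noteq> 0"
  using qq_cases[of m i] qX_nonzero by auto

lemma qq_quadratic: "qq m i * qq m i - qq m i * qsum + 1 = 0"
  using qq_cases[of m i] qX_nonzero by (auto simp: field_simps)

lemma qq_one_plus_square: "1 + qq m i * qq m i \<noteq> 0"
proof
  assume z: "1 + qq m i * qq m i = 0"
  have "qX * qX + 1 = 0"
  proof (cases "qq m i = qX")
    case True then show ?thesis using z by (simp add: add.commute)
  next
    case False
    then have r: "qq m i = inverse qX" using qq_cases by blast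
    have "qX * qX * (1 + qq m i * qq m i) = qX * qX + 1"
      unfolding r using qX_nonzero by (simp add: field_simps)
    then show ?thesis using z by simp
  qed
  then show False using qX_square by (simp add: eq_neg_iff_add_eq_0)
qed

locale uq_F =
  fixes m n :: nat and \<phi> :: "Cq \<Rightarrow> 'a::ring_1" and K Ki E F :: "nat \<Rightarrow> 'a"
  assumes rels: "Uq_rels m n \<phi> K Ki E F" and n1: "1 \<le> n"

sublocale uq_F \<subseteq> central_scalars \<phi>
proof -
  have "\<phi> 1 = 1 \<and> (\<forall>a b. \<phi> (a + b) = \<phi> a + \<phi> b) \<and> (\<forall>a b. \<phi> (a * b) = \<phi> a * \<phi> b)
      \<and> (\<forall>a x. \<phi> a * x = x * \<phi> a)"
    using rels unfolding Uq_rels_def by (rule conjunct1)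
  then show "central_scalars \<phi>" by unfold_locales blast+
qed

context uq_F
begin

abbreviation Fv :: "nat \<Rightarrow> nat \<Rightarrow> 'a" where "Fv i j \<equiv> Fr \<phi> m F i (j - i)"

lemma rels_far: "\<forall>i\<in>{1..<m+n}. \<forall>j\<in>{1..<m+n}. (i + 1 < j \<or> j + 1 < i) \<longrightarrow>
    E i * E j = E j * E i \<and> F i * F j = F j * F i"
  using rels unfolding Uq_rels_def by (elim conjE) assumption

lemma rels_serre: "\<forall>i\<in>{1..<m+n}. \<forall>j\<in>{1..<m+n}. (i + 1 = j \<or> j + 1 = i) \<and> i \<noteq> m \<longrightarrow>
    E i * E i * E j - \<phi> (qX + inverse qX) * E i * E j * E i + E j * E i * E i = 0
    \<and> F i * F i * F j - \<phi> (qX + inverse qX) * F i * F j * F i + F j * F i * F i = 0"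
  using rels unfolding Uq_rels_def by (elim conjE) assumption

lemma rels_odd_serre: "2 \<le> m \<and> 2 \<le> n \<longrightarrow>
    Eij \<phi> m E (m - 1) (m + 2) * E m + E m * Eij \<phi> m E (m - 1) (m + 2) = 0
    \<and> Fij \<phi> m F (m - 1) (m + 2) * F m + F m * Fij \<phi> m F (m - 1) (m + 2) = 0"
  using rels unfolding Uq_rels_def by (elim conjE) assumption

lemma F_odd_square: "F m * F m = 0"
  using rels unfolding Uq_rels_def by (elim conjE) assumption

lemma F_far: assumes "1 \<le> i" "i < m + n" "1 \<le> j" "j < m + n" "i + 1 < j \<or> j + 1 < i"
  shows "F i * F j = F j * F i"
proof -
  have "i \<in> {1..<m+n}" "j \<in> {1..<m+n}" using assms by auto
  then show ?thesis using rels_far assms(5) by blast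
qed

lemma F_serre: assumes "1 \<le> i" "i < m + n" "1 \<le> j" "j < m + n" "i + 1 = j \<or> j + 1 = i" "i \<noteq> m"
  shows "serre qsum (F i) (F j) = 0"
proof -
  have "i \<in> {1..<m+n}" "j \<in> {1..<m+n}" using assms by auto
  then show ?thesis using rels_serre assms(5,6) unfolding serre_def by blast
qed

lemma Fv_odd_serre: "2 \<le> m \<Longrightarrow> 2 \<le> n \<Longrightarrow> Fv (m - 1) (m + 2) * F m + F m * Fv (m - 1) (m + 2) = 0"
  using rels_odd_serre unfolding Fij_def by blast

lemma Fv_step: "i + 2 \<le> j \<Longrightarrow> Fv i j = twist (qq m (i + 1)) (F i) (Fv (i + 1) j)"
proof -
  assume "i + 2 \<le> j"
  define d where "d = j - i - 2"
  have d: "j - i = Suc (Suc d)" unfolding d_def using \<open>i + 2 \<le> j\<close> by arith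
  then have "j - (i + 1) = Suc d" by simp
  then show ?thesis using d by (simp add: twist_def)
qed

lemma qcomm_Fv_left: "i < j \<Longrightarrow> (\<And>r. i \<le> r \<Longrightarrow> r < j \<Longrightarrow> qcomm (F r) Z (g r)) \<Longrightarrow> qcomm (Fv i j) Z (\<Prod>r\<in>{i..<j}. g r)"
proof (induction "j - i" arbitrary: i)
  case 0 then show ?case by simp
next
  case (Suc d)
  show ?case
  proof (cases "j = i + 1")
    case True then show ?thesis using Suc.prems by simp
  next
    case False
    then have ij: "i + 2 \<le> j" using Suc.prems by simp
    have IH: "qcomm (Fv (i+1) j) Z (\<Prod>r\<in>{i+1..<j}. g r)"
      using Suc.hyps(1)[of "i+1"] Suc.hyps(2) Suc.prems ij by simp
    have "qcomm (Fv i j) Z (g i * (\<Prod>r\<in>{i+1..<j}. g r))"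
      unfolding Fv_step[OF ij] using qcomm_twist_left[OF Suc.prems(2)[of i] IH] Suc.prems by simp
    moreover have "{i..<j} = insert i {i+1..<j}" using ij by auto
    ultimately show ?thesis by simp
  qed
qed

lemma qcomm_Fv_right: "i < j \<Longrightarrow> (\<And>r. i \<le> r \<Longrightarrow> r < j \<Longrightarrow> qcomm Z (F r) (g r)) \<Longrightarrow> qcomm Z (Fv i j) (\<Prod>r\<in>{i..<j}. g r)"
proof (induction "j - i" arbitrary: i)
  case 0 then show ?case by simp
next
  case (Suc d)
  show ?case
  proof (cases "j = i + 1")
    case True then show ?thesis using Suc.prems by simp
  next
    case False
    then have ij: "i + 2 \<le> j" using Suc.prems by simp
    have IH: "qcomm Z (Fv (i+1) j) (\<Prod>r\<in>{i+1..<j}. g r)"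
      using Suc.hyps(1)[of "i+1"] Suc.hyps(2) Suc.prems ij by simp
    have "qcomm Z (Fv i j) (g i * (\<Prod>r\<in>{i+1..<j}. g r))"
      unfolding Fv_step[OF ij] using qcomm_twist_right[OF Suc.prems(2)[of i] IH] Suc.prems by simp
    moreover have "{i..<j} = insert i {i+1..<j}" using ij by auto
    ultimately show ?thesis by simp
  qed
qed

lemma Fv_commute_left: "i < j \<Longrightarrow> (\<And>r. i \<le> r \<Longrightarrow> r < j \<Longrightarrow> qcomm (F r) Z 1) \<Longrightarrow> qcomm (Fv i j) Z 1"
  using qcomm_Fv_left[of i j Z "\<lambda>_. 1"] by simp

lemma Fv_commute_right: "i < j \<Longrightarrow> (\<And>r. i \<le> r \<Longrightarrow> r < j \<Longrightarrow> qcomm Z (F r) 1) \<Longrightarrow> qcomm Z (Fv i j) 1"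
  using qcomm_Fv_right[of i j Z "\<lambda>_. 1"] by simp

lemma F_Fv_far: "1 \<le> l \<Longrightarrow> l < m + n \<Longrightarrow> 1 \<le> i \<Longrightarrow> i < j \<Longrightarrow> j \<le> m + n \<Longrightarrow> l + 1 < i \<or> j < l
   \<Longrightarrow> qcomm (F l) (Fv i j) 1"
  by (rule Fv_commute_right) (auto simp: qcomm_one_iff intro!: F_far)

lemma Fv_F_far: "1 \<le> l \<Longrightarrow> l < m + n \<Longrightarrow> 1 \<le> i \<Longrightarrow> i < j \<Longrightarrow> j \<le> m + n \<Longrightarrow> l + 1 < i \<or> j < l
   \<Longrightarrow> qcomm (Fv i j) (F l) 1"
  using F_Fv_far by (simp add: qcomm_one_iff)

lemma Fv_Fv_far: "1 \<le> i \<Longrightarrow> i < j \<Longrightarrow> j < i' \<Longrightarrow> i' < j' \<Longrightarrow> j' \<le> m + n \<Longrightarrow> qcomm (Fv i j) (Fv i' j') 1"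
  by (rule Fv_commute_left) (auto intro!: F_Fv_far)

lemma Fv_split: "1 \<le> i \<Longrightarrow> i < c \<Longrightarrow> c < j \<Longrightarrow> j \<le> m + n \<Longrightarrow> Fv i j = twist (qq m c) (Fv i c) (Fv c j)"
proof (induction "c - i" arbitrary: c j rule: less_induct)
  case less
  show ?case
  proof (cases "c = i + 1")
    case True then show ?thesis using less.prems Fv_step[of i j] by simp
  next
    case False
    then have c: "i < c - 1" using less.prems by simp
    have IH1: "Fv i j = twist (qq m (c-1)) (Fv i (c-1)) (Fv (c-1) j)"
      using less.hyps[of "c-1" j] less.prems c by simp
    have IH2: "Fv i c = twist (qq m (c-1)) (Fv i (c-1)) (Fv (c-1) c)"
      using less.hyps[of "c-1" c] less.prems c by simp
    have st: "Fv (c-1) j = twist (qq m c) (F (c-1)) (Fv c j)"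
      using Fv_step[of "c-1" j] less.prems c by simp
    have cm: "Fv i (c-1) * Fv c j = Fv c j * Fv i (c-1)"
      using Fv_Fv_far[of i "c-1" c j] less.prems c by (simp add: qcomm_one_iff)
    have "c - (c - 1) = Suc 0" using c by arith
    then have "Fv (c-1) c = F (c-1)" by simp
    then show ?thesis unfolding IH1 IH2 st using twist_swap[OF cm] by simp
  qed
qed

lemma serre_F_Fv_start: assumes "k \<noteq> m" "1 \<le> k" "k + 1 < j" "j \<le> m + n"
  shows "serre qsum (F k) (Fv (k+1) j) = 0"
proof (cases "j = k + 2")
  case True
  then have "Fv (k+1) j = F (k+1)" by simp
  then show ?thesis using F_serre[of k "k+1"] assms by simp
next
  case False
  then have st: "Fv (k+1) j = twist (qq m (k+2)) (F (k+1)) (Fv (k+2) j)"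
    using Fv_step[of "k+1" j] assms by simp
  have c: "Fv (k+2) j * F k = F k * Fv (k+2) j"
    using Fv_F_far[of k "k+2" j] assms False by (simp add: qcomm_one_iff)
  show ?thesis unfolding st using serre_twist(2)[OF F_serre[of k "k+1"] c] assms by simp
qed

lemma serre_F_Fv_end: assumes "l \<noteq> m" "1 \<le> i" "i < l" "l < m + n"
  shows "serre qsum (F l) (Fv i l) = 0"
proof (cases "i = l - 1")
  case True
  then have "l - i = Suc 0" using assms by arith
  then have "Fv i l = F (l - 1)" using True by simp
  then show ?thesis using F_serre[of l "l - 1"] assms by simp
next
  case False
  have "l - (l - 1) = Suc 0" using assms by arith
  then have st: "Fv i l = twist (qq m (l-1)) (Fv i (l-1)) (F (l-1))"
    using Fv_split[of i "l-1" l] assms False by simp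
  have c: "Fv i (l-1) * F l = F l * Fv i (l-1)"
    using Fv_F_far[of l i "l-1"] assms False by (simp add: qcomm_one_iff)
  show ?thesis unfolding st using serre_twist(1)[OF F_serre[of l "l-1"] c] assms by simp
qed

lemma Fv_square_zero_first_column: "1 \<le> i \<Longrightarrow> i \<le> m \<Longrightarrow> Fv i (m+1) * Fv i (m+1) = 0"
proof (induction "m - i" arbitrary: i)
  case 0
  then have "i = m" by simp
  then show ?case using F_odd_square by simp
next
  case (Suc d)
  then have im: "i < m" by simp
  have IH: "Fv (i+1) (m+1) * Fv (i+1) (m+1) = 0" using Suc.hyps(1)[of "i+1"] Suc.hyps(2) Suc.prems im by simp
  have st: "Fv i (m+1) = twist (qq m (i+1)) (F i) (Fv (i+1) (m+1))" using Fv_step[of i "m+1"] im by simp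
  have S: "serre qsum (F i) (Fv (i+1) (m+1)) = 0" using serre_F_Fv_start[of i "m+1"] im Suc.prems n1 by simp
  show ?case unfolding st using twist_square_zero(1)[OF IH S qq_quadratic qsum_nonzero] .
qed

lemma Fv_square_zero: "1 \<le> i \<Longrightarrow> i \<le> m \<Longrightarrow> m < t \<Longrightarrow> t \<le> m + n \<Longrightarrow> Fv i t * Fv i t = 0"
proof (induction t)
  case 0 then show ?case by simp
next
  case (Suc t)
  show ?case
  proof (cases "Suc t = m + 1")
    case True then show ?thesis using Fv_square_zero_first_column Suc.prems by simp
  next
    case False
    then have tm: "m < t" using Suc.prems by simp
    have IH: "Fv i t * Fv i t = 0" using Suc.IH Suc.prems tm by simp
    have "Suc t - t = Suc 0" by simp
    then have st: "Fv i (Suc t) = twist (qq m t) (Fv i t) (F t)"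
      using Fv_split[of i t "Suc t"] Suc.prems tm by simp
    have S: "serre qsum (F t) (Fv i t) = 0" using serre_F_Fv_end[of t i] Suc.prems tm by simp
    show ?thesis unfolding st using twist_square_zero(2)[OF IH S qq_quadratic qsum_nonzero] .
  qed
qed

lemma F_Fv_left_end: assumes "k \<noteq> m" "1 \<le> k" "k + 1 < t" "t \<le> m + n"
  shows "qcomm (F k) (Fv k t) (qq m (k+1))"
proof -
  have base: "qcomm (F k) (Fv k (k+2)) (qq m (k+1))"
  proof -
    have "Fv k (k+2) = twist (qq m (k+1)) (F k) (F (k+1))" using Fv_step[of k "k+2"] by simp
    then show ?thesis using serre_left_end[OF F_serre[of k "k+1"] qq_quadratic] assms by simp
  qed
  show ?thesis
  proof (cases "t = k + 2")
    case True then show ?thesis using base by simp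
  next
    case False
    then have st: "Fv k t = twist (qq m (k+2)) (Fv k (k+2)) (Fv (k+2) t)"
      using Fv_split[of k "k+2" t] assms by simp
    have f: "qcomm (F k) (Fv (k+2) t) 1" using F_Fv_far[of k "k+2" t] assms False by simp
    show ?thesis unfolding st using qcomm_twist_right[OF base f] by simp
  qed
qed

lemma F_Fv_right_end: assumes "a \<noteq> m" "1 \<le> i" "i < a" "a < m + n"
  shows "qcomm (F a) (Fv i (a+1)) (inverse (qq m a))"
proof -
  have "Suc a - a = Suc 0" by simp
  then have st: "Fv i (a+1) = twist (qq m a) (Fv i a) (F a)"
    using Fv_split[of i a "a+1"] assms by simp
  show ?thesis unfolding st using serre_right_end[OF serre_F_Fv_end[of a i] qq_quadratic qq_nonzero] assms by simp
qed

text \<open>F_l commutes with F_{l-1,l+2} if l \<noteq> m (the rank-three configuration) and anticommutes if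
  l = m (the odd Serre relation).\<close>
lemma F_Fv_length3: assumes "2 \<le> l" "l + 2 \<le> m + n"
  shows "qcomm (F l) (Fv (l-1) (l+2)) (if l = m then -1 else 1)"
proof (cases "l = m")
  case True
  then have "Fv (l-1) (l+2) * F l + F l * Fv (l-1) (l+2) = 0" using Fv_odd_serre assms by simp
  then have "F l * Fv (l-1) (l+2) = - (Fv (l-1) (l+2) * F l)" by (simp add: eq_neg_iff_add_eq_0 add.commute)
  then show ?thesis using True unfolding qcomm_def by (simp add: phi_minus phi_one)
next
  case False
  define r where "r = qq m l"
  have r1: "qq m (l+1) = r" unfolding r_def qq_def using False by auto
  have e1: "Fv (l-1) (l+2) = twist r (F (l-1)) (Fv l (l+2))"
    using Fv_step[of "l-1" "l+2"] assms unfolding r_def by (simp add: numeral_3_eq_3)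
  have e2: "Fv l (l+2) = twist r (F l) (F (l+1))"
    using Fv_step[of l "l+2"] r1 by simp
  have e3: "Fv (l-1) (l+1) = twist r (F (l-1)) (F l)"
    using Fv_step[of "l-1" "l+1"] assms unfolding r_def by simp
  have ac: "F (l-1) * F (l+1) = F (l+1) * F (l-1)" using F_far[of "l-1" "l+1"] assms by simp
  have L: "qcomm (F l) (twist r (F l) (F (l+1))) r" using F_Fv_left_end[of l "l+2"] False assms e2 r1 by simp
  have Rr: "qcomm (F l) (twist r (F (l-1)) (F l)) (inverse r)" using F_Fv_right_end[of l "l-1"] False assms e3
    unfolding r_def by simp
  show ?thesis unfolding e1 e2 using twist_rank3_commute[OF ac L Rr] False qq_nonzero qq_one_plus_square
    unfolding r_def by simp
qed

lemma F_Fv_inner_base: assumes "2 \<le> l" "l + 2 \<le> t" "t \<le> m + n"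
  shows "qcomm (F l) (Fv (l-1) t) (if l = m then -1 else 1)"
proof (cases "t = l + 2")
  case True then show ?thesis using F_Fv_length3 assms by simp
next
  case False
  then have st: "Fv (l-1) t = twist (qq m (l+2)) (Fv (l-1) (l+2)) (Fv (l+2) t)"
    using Fv_split[of "l-1" "l+2" t] assms by simp
  have f: "qcomm (F l) (Fv (l+2) t) 1" using F_Fv_far[of l "l+2" t] assms False by simp
  show ?thesis unfolding st using qcomm_twist_right[OF F_Fv_length3[OF assms(1)] f] assms by simp
qed

lemma F_Fv_inner: assumes "1 \<le> i" "i < l" "l + 1 < t" "t \<le> m + n"
  shows "qcomm (F l) (Fv i t) (if l = m then -1 else 1)"
proof (cases "i = l - 1")
  case True then show ?thesis using F_Fv_inner_base[of l t] assms by simp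
next
  case False
  then have st: "Fv i t = twist (qq m (l-1)) (Fv i (l-1)) (Fv (l-1) t)"
    using Fv_split[of i "l-1" t] assms by simp
  have f: "qcomm (F l) (Fv i (l-1)) 1" using F_Fv_far[of l i "l-1"] assms False by simp
  show ?thesis unfolding st using qcomm_twist_right[OF f F_Fv_inner_base[of l t]] assms by simp
qed

definition Col :: "nat \<Rightarrow> 'a" where "Col t = prod_list (map (\<lambda>i. Fv i t) [1..<m+1])"

lemma F_I1_columns: "F_I1 \<phi> m n F = prod_list (map Col (rev [m+1..<m+n+1]))"
  unfolding F_I1_def I1_list_def map_concat prod_list_concat Col_def
  by (simp add: comp_def Fij_def)

definition Col_prefix :: "nat \<Rightarrow> nat \<Rightarrow> 'a" where "Col_prefix a p = prod_list (map (\<lambda>i. Fv i a) [1..<p+1])"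

lemma Fv_nested: assumes "1 \<le> p" "p < j" "j \<le> m" "m < a" "a < m + n"
  shows "\<exists>c. qcomm (Fv j a) (Fv p (a+1)) c"
proof -
  have "qcomm (Fv j a) (Fv p (a+1)) (\<Prod>r\<in>{j..<a}. (if r = m then -1 else 1))"
  proof (rule qcomm_Fv_left)
    show "j < a" using assms by simp
    fix r assume r: "j \<le> r" "r < a"
    show "qcomm (F r) (Fv p (a+1)) (if r = m then -1 else 1)"
      by (rule F_Fv_inner) (use assms r in auto)
  qed
  then show ?thesis by blast
qed

lemma Fv_crossing: assumes "1 \<le> p" "p < j" "j \<le> m" "m < a" "a < m + n"
  shows "\<exists>c0 c'. c0 \<noteq> 0 \<and> \<phi> c0 * (Fv p a * Fv j (a+1)) = - (Fv j (a+1) * Fv p a) - \<phi> c' * (Fv p (a+1) * Fv j a)"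
proof -
  obtain c where c: "qcomm (Fv j a) (Fv p (a+1)) c" using Fv_nested assms by blast
  have yp: "Fv p a = twist (qq m j) (Fv p j) (Fv j a)" using Fv_split[of p j a] assms by simp
  have xp: "Fv p (a+1) = twist (qq m j) (Fv p j) (Fv j (a+1))" using Fv_split[of p j "a+1"] assms by simp
  have "Suc a - a = Suc 0" by simp
  then have x: "Fv j (a+1) = twist (qq m a) (Fv j a) (F a)" using Fv_split[of j a "a+1"] assms by simp
  have yy: "Fv j a * Fv j a = 0" using Fv_square_zero[of j a] assms by simp
  have nest: "Fv j a * Fv p (a+1) = \<phi> c * Fv p (a+1) * Fv j a" using c unfolding qcomm_def .
  have "qq m j * qq m a \<noteq> 0" using qq_nonzero by simp
  then show ?thesis using twist_crossing[OF yp xp x yy nest] by blast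
qed

lemma Fv_column_qcomm: assumes "1 \<le> j" "j < s" "s \<le> m" "m < a" "a < m + n"
  shows "qcomm (Fv s (a+1)) (Fv j (a+1)) (- qX)"
proof -
  have st: "Fv j (a+1) = twist (qq m s) (Fv j s) (Fv s (a+1))" using Fv_split[of j s "a+1"] assms by simp
  have "qq m s = qX" using qq_even assms by simp
  then show ?thesis unfolding st using qcomm_twist_nilpotent[OF Fv_square_zero[of s "a+1"]] assms by simp
qed

lemma Col_annihilates: assumes "1 \<le> j" "j \<le> m" "m < a" "a < m + n"
  shows "Col (a+1) * Fv j (a+1) = 0"
proof -
  have L: "[1..<m+1] = [1..<j] @ j # [j+1..<m+1]"
    using upt_split[of 1 j "m+1"] upt_conv_Cons[of j "m+1"] assms by simp
  define P1 where "P1 = prod_list (map (\<lambda>i. Fv i (a+1)) [1..<j])"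
  define P2 where "P2 = prod_list (map (\<lambda>i. Fv i (a+1)) [j+1..<m+1])"
  have rw: "Col (a+1) = P1 * (Fv j (a+1) * P2)" unfolding Col_def P1_def P2_def L by simp
  have "qcomm P2 (Fv j (a+1)) ((- qX) ^ length (map (\<lambda>i. Fv i (a+1)) [j+1..<m+1]))"
    unfolding P2_def
  proof (rule qcomm_prod_left, intro ballI)
    fix u assume "u \<in> set (map (\<lambda>i. Fv i (a+1)) [j+1..<m+1])"
    then obtain s where s0: "s \<in> set [j+1..<m+1]" "u = Fv s (a+1)" by (auto simp only: set_map)
    then have s: "j < s" "s \<le> m" "u = Fv s (a+1)" by (auto simp del: upt_Suc)
    show "qcomm u (Fv j (a+1)) (- qX)" unfolding s(3) by (rule Fv_column_qcomm) (use assms s in auto)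
  qed
  then obtain c where c: "P2 * Fv j (a+1) = \<phi> c * Fv j (a+1) * P2" unfolding qcomm_def by blast
  have "Col (a+1) * Fv j (a+1) = P1 * Fv j (a+1) * (P2 * Fv j (a+1))" unfolding rw by (simp add: mult.assoc)
  also have "\<dots> = \<phi> c * (P1 * (Fv j (a+1) * Fv j (a+1)) * P2)" unfolding c by (simp add: scalar_simps mult.assoc)
  also have "\<dots> = 0" using Fv_square_zero[of j "a+1"] assms by simp
  finally show ?thesis .
qed

lemma Col_prefix_annihilates: assumes "m < a" "a < m + n"
  shows "p \<le> m \<Longrightarrow> p < j \<Longrightarrow> j \<le> m \<Longrightarrow> Col (a+1) * Col_prefix a p * Fv j (a+1) = 0"
proof (induction p arbitrary: j)
  case 0 then show ?case using Col_annihilates[of j a] assms by (simp add: Col_prefix_def)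
next
  case (Suc p)
  have Y: "Col_prefix a (Suc p) = Col_prefix a p * Fv (p+1) a" unfolding Col_prefix_def by simp
  obtain c0 c' where c: "c0 \<noteq> 0" and e: "\<phi> c0 * (Fv (p+1) a * Fv j (a+1)) = - (Fv j (a+1) * Fv (p+1) a) - \<phi> c' * (Fv (p+1) (a+1) * Fv j a)"
    using Fv_crossing[of "p+1" j a] Suc.prems assms by auto
  have z1: "Col (a+1) * Col_prefix a p * Fv j (a+1) = 0" using Suc.IH[of j] Suc.prems by simp
  have z2: "Col (a+1) * Col_prefix a p * Fv (p+1) (a+1) = 0" using Suc.IH[of "p+1"] Suc.prems by simp
  have "\<phi> c0 * (Col (a+1) * Col_prefix a (Suc p) * Fv j (a+1)) = Col (a+1) * Col_prefix a p * (\<phi> c0 * (Fv (p+1) a * Fv j (a+1)))"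
    unfolding Y by (simp add: scalar_simps mult.assoc)
  also have "\<dots> = - ((Col (a+1) * Col_prefix a p * Fv j (a+1)) * Fv (p+1) a) - \<phi> c' * ((Col (a+1) * Col_prefix a p * Fv (p+1) (a+1)) * Fv j a)"
    unfolding e by (simp add: algebra_simps scalar_simps)
  also have "\<dots> = 0" unfolding z1 z2 by simp
  finally show ?case by (rule phi_cancel[OF c])
qed

text \<open>For m < a, F_a passes through Col (a+1) with factor q^m (from the right ends) and through each
  factor of Col a with factor q^{-1}, the correction term being annihilated; so it commutes
  with Col (a+1) * Col a.\<close>
lemma F_Col_pair_prefix: assumes "m < a" "a < m + n"
  shows "p \<le> m \<Longrightarrow> qcomm (F a) (Col (a+1) * Col_prefix a p) (qX ^ m * inverse qX ^ p)"
proof (induction p)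
  case 0
  have "qcomm (F a) (Col (a+1)) (qX ^ length (map (\<lambda>i. Fv i (a+1)) [1..<m+1]))"
    unfolding Col_def
  proof (rule qcomm_prod_right, intro ballI)
    fix u assume "u \<in> set (map (\<lambda>i. Fv i (a+1)) [1..<m+1])"
    then obtain i where i: "1 \<le> i" "i \<le> m" "u = Fv i (a+1)" by (auto simp del: upt_Suc)
    have "qcomm (F a) (Fv i (a+1)) (inverse (qq m a))" by (rule F_Fv_right_end) (use assms i in auto)
    then show "qcomm (F a) u qX" using i qq_odd[of m a] assms by simp
  qed
  then show ?case by (simp add: Col_prefix_def del: upt_Suc)
next
  case (Suc p)
  have IH: "F a * (Col (a+1) * Col_prefix a p) = \<phi> (qX ^ m * inverse qX ^ p) * (Col (a+1) * Col_prefix a p) * F a"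
    using Suc.IH Suc.prems unfolding qcomm_def by simp
  have Y: "Col_prefix a (Suc p) = Col_prefix a p * Fv (p+1) a" unfolding Col_prefix_def by simp
  have "Suc a - a = Suc 0" by simp
  then have x: "Fv (p+1) (a+1) = twist (inverse qX) (Fv (p+1) a) (F a)"
    using Fv_split[of "p+1" a "a+1"] Suc.prems assms qq_odd[of m a] by simp
  have fy: "F a * Fv (p+1) a = Fv (p+1) (a+1) + \<phi> (inverse qX) * (Fv (p+1) a * F a)"
    unfolding x twist_def by (simp add: mult.assoc)
  have z: "Col (a+1) * Col_prefix a p * Fv (p+1) (a+1) = 0" using Col_prefix_annihilates[OF assms, of p "p+1"] Suc.prems by simp
  have "F a * (Col (a+1) * Col_prefix a (Suc p)) = (F a * (Col (a+1) * Col_prefix a p)) * Fv (p+1) a"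
    unfolding Y by (simp add: mult.assoc)
  also have "\<dots> = \<phi> (qX ^ m * inverse qX ^ p) * (Col (a+1) * Col_prefix a p * (F a * Fv (p+1) a))"
    unfolding IH by (simp add: mult.assoc)
  also have "\<dots> = \<phi> (qX ^ m * inverse qX ^ p) * (Col (a+1) * Col_prefix a p * Fv (p+1) (a+1))
      + \<phi> (qX ^ m * inverse qX ^ p * inverse qX) * (Col (a+1) * Col_prefix a p * Fv (p+1) a * F a)"
    unfolding fy by (simp add: algebra_simps scalar_simps)
  also have "\<dots> = \<phi> (qX ^ m * inverse qX ^ Suc p) * (Col (a+1) * Col_prefix a (Suc p)) * F a"
    unfolding z Y by (simp add: ac_simps)
  finally show ?case unfolding qcomm_def .
qed

lemma F_Col_pair: assumes "m < a" "a < m + n" shows "qcomm (F a) (Col (a+1) * Col a) 1"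
proof -
  have "Col a = Col_prefix a m" unfolding Col_def Col_prefix_def ..
  moreover have "qX ^ m * inverse qX ^ m = 1" using qX_nonzero by (simp add: power_mult_distrib[symmetric])
  ultimately show ?thesis using F_Col_pair_prefix[OF assms, of m] by simp
qed

text \<open>For k < m, F_k commutes with each column: it commutes with F_{it} for i \<noteq> k, k+1, and with
  F_{kt} F_{k+1,t} since F_k F_{kt} = q F_{kt} F_k and F_{kt}^2 = 0.\<close>
lemma F_Col_commute: assumes "1 \<le> k" "k < m" "m < t" "t \<le> m + n"
  shows "qcomm (F k) (Col t) 1"
proof -
  have L: "[1..<m+1] = [1..<k] @ k # (k+1) # [k+2..<m+1]"
    using upt_split[of 1 k "m+1"] upt_conv_Cons[of k "m+1"] upt_conv_Cons[of "k+1" "m+1"] assms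
    by (simp del: upt_Suc)
  have rw: "Col t = prod_list (map (\<lambda>i. Fv i t) [1..<k]) * (Fv k t * Fv (k+1) t) * prod_list (map (\<lambda>i. Fv i t) [k+2..<m+1])"
    unfolding Col_def L by (simp add: mult.assoc del: upt_Suc)
  have q1: "qcomm (F k) (prod_list (map (\<lambda>i. Fv i t) [1..<k])) 1"
  proof (rule qcomm_prod_map_right)
    fix i assume "i \<in> set [1..<k]"
    then have i: "1 \<le> i" "i < k" by (auto simp del: upt_Suc)
    have "qcomm (F k) (Fv i t) (if k = m then -1 else 1)" by (rule F_Fv_inner) (use assms i in auto)
    then show "qcomm (F k) (Fv i t) 1" using assms by simp
  qed
  have q3: "qcomm (F k) (prod_list (map (\<lambda>i. Fv i t) [k+2..<m+1])) 1"
  proof (rule qcomm_prod_map_right)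
    fix i assume "i \<in> set [k+2..<m+1]"
    then have i: "k + 2 \<le> i" "i \<le> m" by (auto simp del: upt_Suc)
    show "qcomm (F k) (Fv i t) 1" by (rule F_Fv_far) (use assms i in auto)
  qed
  have q2: "qcomm (F k) (Fv k t * Fv (k+1) t) 1"
  proof -
    have le: "F k * Fv k t = \<phi> qX * Fv k t * F k" using F_Fv_left_end[of k t] assms qq_even[of "k+1" m] unfolding qcomm_def by simp
    have st: "Fv k t = twist qX (F k) (Fv (k+1) t)" using Fv_step[of k t] assms qq_even[of "k+1" m] by simp
    have fy: "\<phi> qX * (F k * Fv (k+1) t) = Fv (k+1) t * F k - Fv k t"
      by (simp add: st twist_def mult.assoc)
    have zz: "Fv k t * Fv k t = 0" using Fv_square_zero[of k t] assms by simp
    have "F k * (Fv k t * Fv (k+1) t) = Fv k t * (\<phi> qX * (F k * Fv (k+1) t))"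
      by (simp add: mult.assoc[symmetric] le scalar_simps)
    also have "\<dots> = Fv k t * Fv (k+1) t * F k" unfolding fy by (simp add: right_diff_distrib zz mult.assoc)
    finally show ?thesis unfolding qcomm_one_iff .
  qed
  show ?thesis unfolding rw using qcomm_mult_right[OF qcomm_mult_right[OF q1 q2] q3] by simp
qed

text \<open>For k > m, F_k commutes with every column other than Col (k+1) and Col k: the root vectors
  of later columns contain F_k strictly inside, those of earlier columns do not involve it.\<close>
lemma F_Col_commute_far: assumes "m < k" "k < m + n" "m < t" "t \<le> m + n" "t \<noteq> k" "t \<noteq> k + 1"
  shows "qcomm (F k) (Col t) 1"
  unfolding Col_def
proof (rule qcomm_prod_map_right)
  fix i assume "i \<in> set [1..<m+1]"
  then have i: "1 \<le> i" "i \<le> m" by (auto simp del: upt_Suc)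
  show "qcomm (F k) (Fv i t) 1"
  proof (cases "k + 1 < t")
    case True
    have "qcomm (F k) (Fv i t) (if k = m then -1 else 1)"
      by (rule F_Fv_inner) (use assms i True in auto)
    then show ?thesis using assms by simp
  next
    case False
    show ?thesis by (rule F_Fv_far) (use assms i False in auto)
  qed
qed

lemma F_F_I1_commute: assumes "1 \<le> k" "k < m + n" "k \<noteq> m"
  shows "qcomm (F k) (F_I1 \<phi> m n F) 1"
proof (cases "k < m")
  case True
  show ?thesis unfolding F_I1_columns
  proof (rule qcomm_prod_map_right)
    fix t assume "t \<in> set (rev [m+1..<m+n+1])"
    then have t: "m < t" "t \<le> m + n" by (auto simp del: upt_Suc)
    show "qcomm (F k) (Col t) 1" by (rule F_Col_commute) (use assms True t in auto)
  qed
next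
  case False
  then have k: "m < k" using assms by simp
  have L: "rev [m+1..<m+n+1] = rev [k+2..<m+n+1] @ [k+1, k] @ rev [m+1..<k]"
    using upt_split[of "m+1" k "m+n+1"] upt_conv_Cons[of k "m+n+1"] upt_conv_Cons[of "k+1" "m+n+1"] k assms
    by (simp del: upt_Suc)
  have split: "F_I1 \<phi> m n F = prod_list (map Col (rev [k+2..<m+n+1])) * (Col (k+1) * Col k)
      * prod_list (map Col (rev [m+1..<k]))"
    unfolding F_I1_columns L by (simp add: mult.assoc del: upt_Suc)
  have later: "qcomm (F k) (prod_list (map Col (rev [k+2..<m+n+1]))) 1"
    by (rule qcomm_prod_map_right, rule F_Col_commute_far) (use k assms in \<open>auto simp del: upt_Suc\<close>)
  have earlier: "qcomm (F k) (prod_list (map Col (rev [m+1..<k]))) 1"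
    by (rule qcomm_prod_map_right, rule F_Col_commute_far) (use k assms in \<open>auto simp del: upt_Suc\<close>)
  show ?thesis unfolding split
    using qcomm_mult_right[OF qcomm_mult_right[OF later F_Col_pair[OF k assms(2)]] earlier] by simp
qed

lemma Fv_F_I1_commute: assumes "(i, j) \<in> I0 m n"
  shows "Fv i j * F_I1 \<phi> m n F = F_I1 \<phi> m n F * Fv i j"
proof -
  have ij: "(1 \<le> i \<and> i < j \<and> j \<le> m) \<or> (m + 1 \<le> i \<and> i < j \<and> j \<le> m + n)"
    using assms unfolding I0_def by auto
  have "qcomm (Fv i j) (F_I1 \<phi> m n F) 1"
  proof (rule Fv_commute_left)
    show "i < j" using ij by auto
    fix r assume "i \<le> r" "r < j"
    then show "qcomm (F r) (F_I1 \<phi> m n F) 1" using F_F_I1_commute[of r] ij by auto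
  qed
  then show ?thesis unfolding qcomm_one_iff .
qed

end

theorem lemma5p7:
  fixes m n :: nat and \<phi> :: "Cq \<Rightarrow> 'a::ring_1" and K Ki E F :: "nat \<Rightarrow> 'a" and i j :: nat
  assumes "1 \<le> m" and "1 \<le> n"
    and "Uq_rels m n \<phi> K Ki E F"
    and "(i, j) \<in> I0 m n"
  shows "\<exists>z::int. Fij \<phi> m F i j * F_I1 \<phi> m n F = \<phi> (qX powi z) * F_I1 \<phi> m n F * Fij \<phi> m F i j"
proof -
  interpret uq_F m n \<phi> K Ki E F using assms by unfold_locales
  have "Fij \<phi> m F i j * F_I1 \<phi> m n F = \<phi> (qX powi 0) * F_I1 \<phi> m n F * Fij \<phi> m F i j"
    using Fv_F_I1_commute[OF assms(4)] unfolding Fij_def by (simp add: phi_one)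
  then show ?thesis by blast
qed

end
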